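(* Consider a pairing heap built by an arbitrary sequence of the operations make-heap, insert, get-min, decrease-key and delete-min, starting from an empty heap, and let $n$ be its current number of elements and $N$ its current sticky size. Then the potential $\Phi$ of the heap is $O(N) = O(n)$, with the hidden constant independent of the heap and of the operation history.
   Context: A pairing heap is a heap-ordered rooted ordered tree (the "general view"): each node stores a key, has zero or more children ordered from left to right, and every child has a strictly larger key than its parent. It is stored in the "binary view" via the leftmost-child/right-sibling correspondence: the left child of $x$ in the binary view is the leftmost child of $x$ in the general view, and the right child of $x$ in the binary view is the next sibling to the right of $x$ in the general view. Pairing two heap-ordered trees makes the root with the larger key the leftmost child of the other root. Operations: make-heap returns an empty heap; get-min returns the root key; insert creates a new node, which becomes the root if the heap is empty and otherwise is paired with the root; decrease-key$(p,y)$ (with $y$ strictly less than the current key of the node $p$) sets the key to $y$ and, if the node is not the root, detaches it (with its general-view subtree) from its parent and pairs it with the root; delete-min removes the root, then (first pass) pairs the root's former children in consecutive pairs from left to right, then (second pass) repeatedly pairs the two rightmost remaining trees until one tree remains. Sticky size: $N$ is initially $1$; after every heap operation, if $n \ge 2N$ then $N$ is doubled, and if $n \le N/2$ then $N$ is halved, where $n$ is the current number of elements. Let $\lg = \log_2$. For a node $x$, $|x|$ is the number of nodes in the subtree rooted at $x$ in the binary view, and $x_L$, $x_R$ are its left and right children in the binary view (a missing child has size $0$), so $|x| = |x_L|+|x_R|+1$. Node potential $\phi_x$: if $|x_L| > \lg N$ and $|x_R| > \lg N$, $x$ is large and $\phi_x = 400 + 100\lg|x|$; if $|x_L| \le \lg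 N < |x_R|$, $x$ is mixed and $\phi_x = 400 + 100\frac{|x_L|}{\lg N}\lg|x|$ (symmetrically, if $|x_R| \le \lg N < |x_L|$, $x$ is mixed and $\phi_x = 400 + 100\frac{|x_R|}{\lg N}\lg|x|$); if $|x_L|\le \lg N$ and $|x_R| \le \lg N$, $x$ is small and $\phi_x = 0$. Edge potential: an edge of the binary view joining a large node to its right child (in the binary view) that is also large has potential $-7$; all other edges have potential $0$. The potential of the heap is $\Phi = 900|N-n| + \sum_x \phi_x + (\text{sum of edge potentials})$. *)

theory Defs
  imports Complex_Main
begin

text \<open>Binary view of a pairing heap: Node left id key right, where left = leftmost
  child and right = next sibling (general view). Node identities (nat) make
  decrease-key addressable.\<close>

datatype 'a ph = Leaf | Node "'a ph" nat 'a "'a ph"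

fun tsize :: "'a ph \<Rightarrow> nat" where
  "tsize Leaf = 0"
| "tsize (Node l i k r) = tsize l + tsize r + 1"

fun ids :: "'a ph \<Rightarrow> nat set" where
  "ids Leaf = {}"
| "ids (Node l i k r) = insert i (ids l \<union> ids r)"

text \<open>Pairing of two heap-ordered trees given by their roots (root siblings ignored).
  Ties: the second tree becomes the child of the first.\<close>
fun link :: "'a::linorder ph \<Rightarrow> 'a ph \<Rightarrow> 'a ph" where
  "link Leaf t = t"
| "link t Leaf = t"
| "link (Node l1 i1 k1 r1) (Node l2 i2 k2 r2) =
     (if k2 < k1 then Node (Node l1 i1 k1 l2) i2 k2 Leaf
      else Node (Node l2 i2 k2 l1) i1 k1 Leaf)"

text \<open>List of the general-view trees along a right spine (children, left to right).\<close>
fun spine :: "'a ph \<Rightarrow> 'a ph list" where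
  "spine Leaf = []"
| "spine (Node a i k r) = Node a i k Leaf # spine r"

fun pass1 :: "'a::linorder ph list \<Rightarrow> 'a ph list" where
  "pass1 (a # b # rest) = link a b # pass1 rest"
| "pass1 ts = ts"

fun pass2 :: "'a::linorder ph list \<Rightarrow> 'a ph" where
  "pass2 [] = Leaf"
| "pass2 [t] = t"
| "pass2 (t # ts) = link t (pass2 ts)"

fun delete_min :: "'a::linorder ph \<Rightarrow> 'a ph" where
  "delete_min Leaf = Leaf"
| "delete_min (Node l i k r) = pass2 (pass1 (spine l))"

fun insert_node :: "nat \<Rightarrow> 'a::linorder \<Rightarrow> 'a ph \<Rightarrow> 'a ph" where
  "insert_node i x Leaf = Node Leaf i x Leaf"
| "insert_node i x t = link t (Node Leaf i x Leaf)"

fun lookup :: "nat \<Rightarrow> 'a ph \<Rightarrow> ('a ph \<times> 'a) option" where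
  "lookup p Leaf = None"
| "lookup p (Node l i k r) =
     (if i = p then Some (l, k)
      else (case lookup p l of Some v \<Rightarrow> Some v | None \<Rightarrow> lookup p r))"

text \<open>Remove node p together with its general-view subtree: its right sibling takes its place.\<close>
fun cut :: "nat \<Rightarrow> 'a ph \<Rightarrow> 'a ph" where
  "cut p Leaf = Leaf"
| "cut p (Node l i k r) = (if i = p then r else Node (cut p l) i k (cut p r))"

fun decrease_key :: "nat \<Rightarrow> 'a::linorder \<Rightarrow> 'a ph \<Rightarrow> 'a ph" where
  "decrease_key p y Leaf = Leaf"
| "decrease_key p y (Node l i k r) =
     (if i = p then Node l i y r
      else (case lookup p l of
              None \<Rightarrow> Node l i k r
            | Some (a, _) \<Rightarrow> link (Node (cut p l) i k r) (Node a p y Leaf)))"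

text \<open>Sticky size update after an operation (N stays a power of two, at least 1).\<close>
definition sticky_upd :: "nat \<Rightarrow> nat \<Rightarrow> nat" where
  "sticky_upd n N =
     (if n \<ge> 2 * N then 2 * N else if 2 * n \<le> N \<and> N \<ge> 2 then N div 2 else N)"

inductive op_step :: "'a::linorder ph \<times> nat \<Rightarrow> 'a ph \<times> nat \<Rightarrow> bool" where
  ins: "i \<notin> ids t \<Longrightarrow> t' = insert_node i x t \<Longrightarrow>
        op_step (t, N) (t', sticky_upd (tsize t') N)"
| getmin: "op_step (t, N) (t, sticky_upd (tsize t) N)"
| deckey: "lookup p t = Some (a, k) \<Longrightarrow> y < k \<Longrightarrow> t' = decrease_key p y t \<Longrightarrow>
        op_step (t, N) (t', sticky_upd (tsize t') N)"
| delmin: "t \<noteq> Leaf \<Longrightarrow> t' = delete_min t \<Longrightarrow>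
        op_step (t, N) (t', sticky_upd (tsize t') N)"

inductive reachable :: "'a::linorder ph \<times> nat \<Rightarrow> bool" where
  make_heap: "reachable (Leaf, 1)"
| step: "reachable s \<Longrightarrow> op_step s s' \<Longrightarrow> reachable s'"

definition lg :: "real \<Rightarrow> real" where "lg x = log 2 x"

definition node_pot :: "nat \<Rightarrow> nat \<Rightarrow> nat \<Rightarrow> real" where
  "node_pot N a b =
     (let L = lg (real N); s = real (a + b + 1) in
      if real a > L \<and> real b > L then 400 + 100 * lg s
      else if real a \<le> L \<and> L < real b then 400 + 100 * (real a / L) * lg s
      else if real b \<le> L \<and> L < real a then 400 + 100 * (real b / L) * lg s
      else 0)"

definition is_large :: "nat \<Rightarrow> 'a ph \<Rightarrow> bool" where
  "is_large N t = (case t of Leaf \<Rightarrow> False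
     | Node l i k r \<Rightarrow> real (tsize l) > lg (real N) \<and> real (tsize r) > lg (real N))"

fun tree_pot :: "nat \<Rightarrow> 'a ph \<Rightarrow> real" where
  "tree_pot N Leaf = 0"
| "tree_pot N (Node l i k r) =
     node_pot N (tsize l) (tsize r)
     + (if is_large N (Node l i k r) \<and> is_large N r then -7 else 0)
     + tree_pot N l + tree_pot N r"

definition Phi :: "nat \<Rightarrow> 'a ph \<Rightarrow> real" where
  "Phi N t = 900 * \<bar>real N - real (tsize t)\<bar> + tree_pot N t"

end

(*
  Every operation changes the number n of elements by at most one, provided the heap
  stays a single general-view tree with distinct node identities, which is itself
  invariant; hence the sticky size satisfies n < 2N <= 4n + 2 at all times.
  The tree potential is bounded by induction over the binary view: a subtree with at
  most lg N nodes contains only small nodes, and a subtree with s > lg N nodes has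
  potential at most 1000 s - 100 lg N - 507. The spare 100 lg N pays for a large root,
  whose potential is at most 500 + 100 lg N because s < 2N, while a mixed root costs
  only O(size of its small child). So Phi <= 900 |N - n| + 1000 n, which is O(n) and O(N).
*)
theory Submission
  imports Defs "HOL-Library.Multiset"
begin

fun id_mset :: "'a ph \<Rightarrow> nat multiset" where
  "id_mset Leaf = {#}"
| "id_mset (Node l i k r) = add_mset i (id_mset l + id_mset r)"

lemma set_mset_id_mset [simp]: "set_mset (id_mset t) = ids t"
  by (induction t) auto

lemma size_id_mset [simp]: "size (id_mset t) = tsize t"
  by (induction t) auto

text \<open>Without distinct identities \<open>cut\<close> may remove several subtrees, and
  decrease-key would lose nodes.\<close>
definition distinct_ids :: "'a ph \<Rightarrow> bool" where
  "distinct_ids t \<longleftrightarrow> (\<forall>x. count (id_mset t) x \<le> 1)"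

lemma distinct_ids_NodeD:
  assumes "distinct_ids (Node l i k r)"
  shows "distinct_ids l" "distinct_ids r" "ids l \<inter> ids r = {}"
proof -
  have count: "count (id_mset l) x + count (id_mset r) x \<le> 1" for x
    using assms[unfolded distinct_ids_def, rule_format, of x] by (simp split: if_splits)
  then show "distinct_ids l" "distinct_ids r"
    unfolding distinct_ids_def by (meson add_leD1 add_leD2)+
  have False if "x \<in> ids l" "x \<in> ids r" for x
  proof -
    from that have "0 < count (id_mset l) x" "0 < count (id_mset r) x"
      by (simp_all flip: set_mset_id_mset)
    with count[of x] show False by simp
  qed
  then show "ids l \<inter> ids r = {}" by blast
qed

text \<open>A heap must consist of a single general-view tree: \<open>link\<close>, and with it
  insertion and deletion, silently drops the right siblings of its arguments.\<close>
definition no_sibling :: "'a ph \<Rightarrow> bool" where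
  "no_sibling t \<longleftrightarrow> (case t of Leaf \<Rightarrow> True | Node l i k r \<Rightarrow> r = Leaf)"

lemma no_sibling_simps [simp]:
  "no_sibling Leaf" "no_sibling (Node l i k r) \<longleftrightarrow> r = Leaf"
  by (simp_all add: no_sibling_def)

lemma id_mset_link:
  "no_sibling a \<Longrightarrow> no_sibling b \<Longrightarrow> id_mset (link a b) = id_mset a + id_mset b"
  by (cases a; cases b) simp_all

lemma no_sibling_link: "no_sibling a \<Longrightarrow> no_sibling b \<Longrightarrow> no_sibling (link a b)"
  by (cases a; cases b) simp_all

lemma id_mset_spine: "sum_list (map id_mset (spine t)) = id_mset t"
  by (induction t) auto

lemma no_sibling_spine: "\<forall>u\<in>set (spine t). no_sibling u"
  by (induction t) auto

lemma id_mset_pass1: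
  "\<forall>u\<in>set ts. no_sibling u \<Longrightarrow> sum_list (map id_mset (pass1 ts)) = sum_list (map id_mset ts)"
  by (induction ts rule: pass1.induct) (auto simp: id_mset_link)

lemma no_sibling_pass1: "\<forall>u\<in>set ts. no_sibling u \<Longrightarrow> \<forall>u\<in>set (pass1 ts). no_sibling u"
  by (induction ts rule: pass1.induct) (auto simp: no_sibling_link)

lemma no_sibling_pass2: "\<forall>u\<in>set ts. no_sibling u \<Longrightarrow> no_sibling (pass2 ts)"
  by (induction ts rule: pass2.induct) (auto simp: no_sibling_link)

lemma id_mset_pass2:
  "\<forall>u\<in>set ts. no_sibling u \<Longrightarrow> id_mset (pass2 ts) = sum_list (map id_mset ts)"
  by (induction ts rule: pass2.induct) (auto simp: id_mset_link no_sibling_pass2)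

lemma no_sibling_pass1_spine: "\<forall>u\<in>set (pass1 (spine t)). no_sibling u"
  using no_sibling_pass1 no_sibling_spine by blast

lemma id_mset_delete_min: "id_mset (delete_min (Node l i k r)) = id_mset l"
  by (simp add: id_mset_pass2[OF no_sibling_pass1_spine] id_mset_pass1[OF no_sibling_spine] id_mset_spine)

lemma no_sibling_delete_min: "no_sibling (delete_min t)"
  by (cases t) (simp_all add: no_sibling_pass2[OF no_sibling_pass1_spine])

lemma id_mset_insert_node:
  "no_sibling t \<Longrightarrow> id_mset (insert_node i x t) = add_mset i (id_mset t)"
  by (cases t) (simp_all add: id_mset_link)

lemma no_sibling_insert_node: "no_sibling t \<Longrightarrow> no_sibling (insert_node i x t)"
  by (cases t) (simp_all add: no_sibling_link)

lemma lookup_eq_None_iff: "lookup p t = None \<longleftrightarrow> p \<notin> ids t"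
  by (induction t) (auto split: option.splits)

lemma cut_not_in_ids: "p \<notin> ids t \<Longrightarrow> cut p t = t"
  by (induction t) auto

lemma id_mset_cut:
  assumes "lookup p t = Some (a, k)" "distinct_ids t"
  shows "id_mset t = add_mset p (id_mset (cut p t) + id_mset a)"
  using assms
proof (induction t)
  case Leaf
  then show ?case by simp
next
  case (Node l i k' r)
  show ?case
  proof (cases "i = p")
    case True
    with Node.prems(1) show ?thesis by (simp add: add.commute)
  next
    case False
    show ?thesis
    proof (cases "lookup p l")
      case None
      then have "cut p l = l" by (simp add: lookup_eq_None_iff cut_not_in_ids)
      moreover have "id_mset r = add_mset p (id_mset (cut p r) + id_mset a)"
        using None False Node.prems(1) Node.IH(2) distinct_ids_NodeD(2)[OF Node.prems(2)] by simp
      ultimately show ?thesis using False by simp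
    next
      case (Some v)
      then have "p \<in> ids l" by (metis lookup_eq_None_iff option.distinct(1))
      then have "p \<notin> ids r" using distinct_ids_NodeD(3)[OF Node.prems(2)] by blast
      then have "cut p r = r" by (rule cut_not_in_ids)
      moreover have "id_mset l = add_mset p (id_mset (cut p l) + id_mset a)"
        using Some False Node.prems(1) Node.IH(1) distinct_ids_NodeD(1)[OF Node.prems(2)] by simp
      ultimately show ?thesis using False by simp
    qed
  qed
qed

lemma id_mset_no_sibling_decrease_key:
  assumes "no_sibling t" "distinct_ids t" "lookup p t = Some (a, k)"
  shows "id_mset (decrease_key p y t) = id_mset t" "no_sibling (decrease_key p y t)"
proof -
  obtain l i k' where t: "t = Node l i k' Leaf"
    using assms(1,3) by (cases t) auto
  have "id_mset (decrease_key p y t) = id_mset t \<and> no_sibling (decrease_key p y t)"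
  proof (cases "i = p")
    case False
    then have lookup_l: "lookup p l = Some (a, k)"
      using assms(3) t by (auto split: option.splits)
    have "id_mset l = add_mset p (id_mset (cut p l) + id_mset a)"
      using id_mset_cut[OF lookup_l distinct_ids_NodeD(1)] assms(2) t by simp
    with False lookup_l t show ?thesis
      by (simp add: id_mset_link no_sibling_link)
  next
    case True
    with t show ?thesis by simp
  qed
  then show "id_mset (decrease_key p y t) = id_mset t" "no_sibling (decrease_key p y t)"
    by simp_all
qed

definition heap_inv :: "'a ph \<Rightarrow> bool" where
  "heap_inv t \<longleftrightarrow> no_sibling t \<and> distinct_ids t"

lemma distinct_ids_add_mset:
  "distinct_ids t \<Longrightarrow> i \<notin> ids t \<Longrightarrow> id_mset t' = add_mset i (id_mset t) \<Longrightarrow> distinct_ids t'"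
  by (simp add: distinct_ids_def count_eq_zero_iff flip: set_mset_id_mset)

lemma op_step_heap_inv:
  assumes "op_step (t, N) (t', N')" "heap_inv t"
  shows "heap_inv t'" "N' = sticky_upd (tsize t') N"
    "tsize t' \<le> tsize t + 1" "tsize t \<le> tsize t' + 1"
proof -
  have "heap_inv t' \<and> N' = sticky_upd (tsize t') N \<and> tsize t' \<le> tsize t + 1 \<and> tsize t \<le> tsize t' + 1"
    using assms(1)
  proof cases
    case (ins i x)
    then have "id_mset t' = add_mset i (id_mset t)" "no_sibling t'"
      using id_mset_insert_node no_sibling_insert_node assms(2) by (auto simp: heap_inv_def)
    moreover from this(1) have "tsize t' = tsize t + 1"
      by (simp flip: size_id_mset)
    ultimately show ?thesis
      using ins assms(2) distinct_ids_add_mset by (auto simp: heap_inv_def)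
  next
    case getmin
    with assms(2) show ?thesis by simp
  next
    case (deckey p a k y)
    then have "id_mset t' = id_mset t" "no_sibling t'"
      using id_mset_no_sibling_decrease_key assms(2) by (auto simp: heap_inv_def)
    moreover from this(1) have "tsize t' = tsize t"
      by (simp flip: size_id_mset)
    ultimately show ?thesis
      using deckey assms(2) by (simp add: heap_inv_def distinct_ids_def)
  next
    case delmin
    obtain l i k where t: "t = Node l i k Leaf"
      using assms(2) delmin by (cases t) (auto simp: heap_inv_def)
    have "id_mset t' = id_mset l" "no_sibling t'"
      using delmin t by (metis id_mset_delete_min, metis no_sibling_delete_min)
    moreover from this(1) have "tsize t = tsize t' + 1"
      using t by (simp flip: size_id_mset)
    moreover have "distinct_ids l"
      using assms(2) t distinct_ids_NodeD(1) by (auto simp: heap_inv_def)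
    ultimately show ?thesis
      using delmin by (simp add: heap_inv_def distinct_ids_def)
  qed
  then show "heap_inv t'" "N' = sticky_upd (tsize t') N"
    "tsize t' \<le> tsize t + 1" "tsize t \<le> tsize t' + 1"
    by simp_all
qed

lemma sticky_upd_bounds:
  assumes "1 \<le> N" "n < 2 * N" "N \<le> 2 * n + 1" "n' \<le> n + 1" "n \<le> n' + 1"
  shows "1 \<le> sticky_upd n' N" "n' < 2 * sticky_upd n' N" "sticky_upd n' N \<le> 2 * n' + 1"
proof -
  define M where "M = N div 2"
  have M: "2 * M \<le> N" "N \<le> 2 * M + 1" unfolding M_def by presburger+
  show "1 \<le> sticky_upd n' N" using assms M unfolding sticky_upd_def M_def[symmetric] by auto
  show "n' < 2 * sticky_upd n' N" using assms M unfolding sticky_upd_def M_def[symmetric] by (auto; presburger)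
  show "sticky_upd n' N \<le> 2 * n' + 1" using assms M unfolding sticky_upd_def M_def[symmetric] by auto
qed

lemma reachable_inv:
  assumes "reachable (t, N)"
  shows "heap_inv t" "1 \<le> N" "tsize t < 2 * N" "N \<le> 2 * tsize t + 1"
proof -
  have "heap_inv t \<and> 1 \<le> N \<and> tsize t < 2 * N \<and> N \<le> 2 * tsize t + 1"
    using assms
  proof (induction "(t, N)" arbitrary: t N rule: reachable.induct)
    case make_heap
    then show ?case by (simp add: heap_inv_def distinct_ids_def)
  next
    case (step s t' N')
    obtain t N where s: "s = (t, N)" by fastforce
    with step have "heap_inv t'" "N' = sticky_upd (tsize t') N"
      "tsize t' \<le> tsize t + 1" "tsize t \<le> tsize t' + 1"
      using op_step_heap_inv by blast+
    moreover have "1 \<le> N" "tsize t < 2 * N" "N \<le> 2 * tsize t + 1"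
      using step s by simp_all
    ultimately show ?case using sticky_upd_bounds[of N "tsize t" "tsize t'"] by simp
  qed
  then show "heap_inv t" "1 \<le> N" "tsize t < 2 * N" "N \<le> 2 * tsize t + 1"
    by simp_all
qed

lemma lg_nonneg: "1 \<le> x \<Longrightarrow> 0 \<le> lg x"
  by (simp add: lg_def)

lemma lg_le_lg_plus_1: "0 < s \<Longrightarrow> s \<le> 2 * x \<Longrightarrow> lg s \<le> lg x + 1"
proof -
  assume "0 < s" "s \<le> 2 * x"
  then have "log 2 s \<le> log 2 (2 * x)" by simp
  also have "\<dots> = log 2 x + 1" using \<open>0 < s\<close> \<open>s \<le> 2 * x\<close> by (simp add: log_mult)
  finally show ?thesis by (simp add: lg_def)
qed

lemma lg_of_nat_cases: "1 \<le> N \<Longrightarrow> lg (real N) = 0 \<or> 1 \<le> lg (real N)"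
proof (cases "N = 1")
  case False
  moreover assume "1 \<le> N"
  ultimately have "log 2 2 \<le> log 2 (real N)" by simp
  then show ?thesis by (simp add: lg_def)
qed (simp add: lg_def)

lemma node_pot_small: "real a \<le> lg (real N) \<Longrightarrow> real b \<le> lg (real N) \<Longrightarrow> node_pot N a b = 0"
  by (auto simp: node_pot_def Let_def)

lemma node_pot_nonneg: "1 \<le> N \<Longrightarrow> 0 \<le> node_pot N a b"
  using lg_nonneg[of "real N"] lg_nonneg[of "real (a + b + 1)"] by (auto simp: node_pot_def Let_def)

text \<open>The case \<open>L = 0\<close> arises for \<open>N = 1\<close> and relies on \<open>x / 0 = 0\<close>.\<close>
lemma mult_lg_ratio_le:
  fixes x L g :: real
  assumes "L = 0 \<or> 1 \<le> L" "0 \<le> x" "g \<le> L + 1"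
  shows "x / L * g \<le> 2 * x"
  using assms(1)
proof
  assume "1 \<le> L"
  then have "x / L * g \<le> x / L * (L + 1)" using assms by (intro mult_left_mono) auto
  also have "\<dots> = x + x / L" using \<open>1 \<le> L\<close> by (simp add: field_simps)
  also have "x / L \<le> x" using \<open>1 \<le> L\<close> assms(2) by (simp add: divide_le_eq mult_le_cancel_left1)
  finally show ?thesis by simp
qed (use assms in simp)

lemma node_pot_mixed:
  assumes "1 \<le> N" "a + b < 2 * N"
    and "real (min a b) \<le> lg (real N)" "lg (real N) < real (max a b)"
  shows "node_pot N a b \<le> 400 + 200 * real (min a b)"
proof -
  define L g where "L = lg (real N)" and "g = lg (real (a + b + 1))"
  have "g \<le> L + 1"
    using assms(2) unfolding L_def g_def by (intro lg_le_lg_plus_1) auto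
  then have "real (min a b) / L * g \<le> 2 * real (min a b)"
    using lg_of_nat_cases[OF assms(1)] by (intro mult_lg_ratio_le) (auto simp: L_def)
  moreover have "node_pot N a b = 400 + 100 * (real (min a b) / L) * g"
    using assms(3,4) by (auto simp: node_pot_def Let_def L_def g_def min_def max_def)
  ultimately show ?thesis by simp
qed

lemma node_pot_large:
  assumes "a + b < 2 * N" "lg (real N) < real a" "lg (real N) < real b"
  shows "node_pot N a b \<le> 500 + 100 * lg (real N)"
proof -
  have "lg (real (a + b + 1)) \<le> lg (real N) + 1"
    using assms(1) by (intro lg_le_lg_plus_1) auto
  with assms show ?thesis by (simp add: node_pot_def Let_def)
qed

fun pot_majorant :: "nat \<Rightarrow> 'a ph \<Rightarrow> real" where
  "pot_majorant N Leaf = 0"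
| "pot_majorant N (Node l i k r) =
     node_pot N (tsize l) (tsize r) + 7 + pot_majorant N l + pot_majorant N r"

lemma abs_tree_pot_le: "1 \<le> N \<Longrightarrow> \<bar>tree_pot N t\<bar> \<le> pot_majorant N t"
proof (induction t)
  case (Node l i k r)
  with node_pot_nonneg[OF Node.prems, of "tsize l" "tsize r"] show ?case by auto
qed simp

lemma pot_majorant_le:
  assumes "1 \<le> N" "tsize t \<le> 2 * N"
  shows "pot_majorant N t \<le>
    (if real (tsize t) \<le> lg (real N) then 7 * real (tsize t)
     else 1000 * real (tsize t) - (100 * lg (real N) + 507))"
  using assms(2)
proof (induction t)
  case Leaf
  then show ?case using lg_nonneg[of "real N"] assms(1) by simp
next
  case (Node l i k r)
  define a b L where "a = tsize l" and "b = tsize r" and "L = lg (real N)"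
  have "0 \<le> L" using lg_nonneg assms(1) by (simp add: L_def)
  have sizes: "a + b < 2 * N" using Node.prems by (simp add: a_def b_def)
  have IH_l: "pot_majorant N l \<le> (if real a \<le> L then 7 * real a else 1000 * real a - (100 * L + 507))"
    unfolding a_def L_def using Node.prems by (intro Node.IH(1)) simp
  have IH_r: "pot_majorant N r \<le> (if real b \<le> L then 7 * real b else 1000 * real b - (100 * L + 507))"
    unfolding b_def L_def using Node.prems by (intro Node.IH(2)) simp
  consider "real a \<le> L" "real b \<le> L" | "real a \<le> L" "L < real b" | "L < real a" "real b \<le> L"
    | "L < real a" "L < real b" by fastforce
  then show ?case
  proof cases
    case 1
    with IH_l IH_r show ?thesis using node_pot_small[of a N b] \<open>0 \<le> L\<close> by (simp add: a_def b_def L_def)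
  next
    case 2
    with IH_l IH_r show ?thesis using node_pot_mixed[OF assms(1) sizes] by (simp add: a_def b_def L_def)
  next
    case 3
    with IH_l IH_r show ?thesis using node_pot_mixed[OF assms(1) sizes] by (simp add: a_def b_def L_def)
  next
    case 4
    with IH_l IH_r show ?thesis using node_pot_large[OF sizes] by (simp add: a_def b_def L_def)
  qed
qed

lemma abs_tree_pot_le_linear:
  "1 \<le> N \<Longrightarrow> tsize t \<le> 2 * N \<Longrightarrow> \<bar>tree_pot N t\<bar> \<le> 1000 * real (tsize t)"
  using abs_tree_pot_le[of N t] pot_majorant_le[of N t] lg_nonneg[of "real N"]
  by (simp split: if_splits)

theorem lemma1:
  "\<exists>c::real. \<forall>(t :: 'a::linorder ph) N. reachable (t, N) \<longrightarrow>
      \<bar>Phi N t\<bar> \<le> c * real N \<and> (tsize t \<ge> 1 \<longrightarrow> \<bar>Phi N t\<bar> \<le> c * real (tsize t))"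
proof (intro exI allI impI)
  fix t :: "'a ph" and N
  assume "reachable (t, N)"
  note inv = reachable_inv[OF this]
  have "\<bar>Phi N t\<bar> \<le> 900 * \<bar>real N - real (tsize t)\<bar> + \<bar>tree_pot N t\<bar>"
    unfolding Phi_def by (rule order.trans[OF abs_triangle_ineq]) simp
  also have "\<dots> \<le> 900 * (real N + real (tsize t)) + 1000 * real (tsize t)"
    using inv by (intro add_mono mult_left_mono abs_tree_pot_le_linear) (auto simp: abs_le_iff)
  finally have "\<bar>Phi N t\<bar> \<le> 900 * (real N + real (tsize t)) + 1000 * real (tsize t)" .
  moreover have "real (tsize t) < 2 * real N" "real N \<le> 2 * real (tsize t) + 1"
    using inv by linarith+
  ultimately show "\<bar>Phi N t\<bar> \<le> 5000 * real N \<and> (tsize t \<ge> 1 \<longrightarrow> \<bar>Phi N t\<bar> \<le> 5000 * real (tsize t))"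
    by auto
qed
end
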